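(* Let $s,t_0\ge 2$ be integers. Then for all integers $t\ge t_0$, $$g_{s,t}\le\left(t - t_0 + g_{s,t_0}^{1/(1-s)}\right)^{1-s}.$$ In particular, if $g_{s,t_0} < (t_0-1)^{1-s}$, then $g_{s,t} < (t-1)^{1-s}$ for all $t\ge t_0$.
   Context: For a graph $G$, $k_t(G)$ is the number of cliques on $t$ vertices in $G$ and $\overline{G}$ is the complement. Let $k'_{s,t}(n) = \min\{k_s(\overline{G}) : |V(G)| = n,\ k_t(G) = 0\}$, the minimum number of independent sets of size $s$ in an $n$-vertex graph with no clique of size $t$, and $g_{s,t} = \lim_{n\to\infty}k'_{s,t}(n)/\binom{n}{s}$ (this limit exists and is positive for $s,t\ge 2$). *)

theory Defs
  imports Complex_Main
begin

definition graphs :: "nat \<Rightarrow> nat set set set" where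
  "graphs n = {E. E \<subseteq> {e. e \<subseteq> {0..<n} \<and> card e = 2}}"

definition k_clique :: "nat \<Rightarrow> nat set set \<Rightarrow> nat \<Rightarrow> nat" where
  "k_clique n E t = card {S. S \<subseteq> {0..<n} \<and> card S = t \<and>
      (\<forall>x\<in>S. \<forall>y\<in>S. x \<noteq> y \<longrightarrow> {x, y} \<in> E)}"

definition k_indep :: "nat \<Rightarrow> nat set set \<Rightarrow> nat \<Rightarrow> nat" where
  "k_indep n E s = card {S. S \<subseteq> {0..<n} \<and> card S = s \<and>
      (\<forall>x\<in>S. \<forall>y\<in>S. x \<noteq> y \<longrightarrow> {x, y} \<notin> E)}"

definition kprime :: "nat \<Rightarrow> nat \<Rightarrow> nat \<Rightarrow> nat" where
  "kprime s t n = Min {k_indep n E s | E. E \<in> graphs n \<and> k_clique n E t = 0}"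

definition g :: "nat \<Rightarrow> nat \<Rightarrow> real" where
  "g s t = lim (\<lambda>n. real (kprime s t n) / real (n choose s))"

end

theory Submission
  imports Defs
begin

text \<open>Deleting a vertex from an extremal graph and averaging over the deleted vertex shows that
  k'_{s,t}(n) / C(n,s) is nondecreasing in n, so the limit g_{s,t} exists and dominates every term.
  Joining a K_t-free graph on about \<alpha>k vertices completely to an independent set on the remaining
  (1 - \<alpha>)k vertices gives a K_{t+1}-free graph, whence g_{s,t+1} \<le> g_{s,t} \<alpha>^s + (1 - \<alpha>)^s.
  If g_{s,t} \<le> u^{1-s}, the choice \<alpha> = u/(u+1) yields g_{s,t+1} \<le> (u+1)^{1-s}: the quantity
  g_{s,t}^{1/(1-s)} grows by at least one with each step in t.\<close>

definition cliques :: "nat \<Rightarrow> nat set set \<Rightarrow> nat \<Rightarrow> nat set set" where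
  "cliques n E t = {S. S \<subseteq> {0..<n} \<and> card S = t \<and> pairwise (\<lambda>x y. {x, y} \<in> E) S}"

definition indep_sets :: "nat \<Rightarrow> nat set set \<Rightarrow> nat \<Rightarrow> nat set set" where
  "indep_sets n E s = {S. S \<subseteq> {0..<n} \<and> card S = s \<and> pairwise (\<lambda>x y. {x, y} \<notin> E) S}"

lemma finite_cliques: "finite (cliques n E t)"
  unfolding cliques_def by (rule finite_subset[of _ "Pow {0..<n}"]) auto

lemma finite_indep_sets: "finite (indep_sets n E s)"
  unfolding indep_sets_def by (rule finite_subset[of _ "Pow {0..<n}"]) auto

lemma k_clique_eq_card: "k_clique n E t = card (cliques n E t)"
  by (simp add: k_clique_def cliques_def pairwise_def)

lemma k_clique_eq_0_iff: "k_clique n E t = 0 \<longleftrightarrow> cliques n E t = {}"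
  by (simp add: k_clique_eq_card finite_cliques)

lemma k_indep_eq_card: "k_indep n E s = card (indep_sets n E s)"
  by (simp add: k_indep_def indep_sets_def pairwise_def)

lemma k_indep_le_binomial: "k_indep n E s \<le> n choose s"
proof -
  have "k_indep n E s \<le> card {S. S \<subseteq> {0..<n} \<and> card S = s}"
    unfolding k_indep_eq_card indep_sets_def by (rule card_mono) auto
  then show ?thesis by (simp add: n_subsets)
qed

lemma finite_graphs: "finite (graphs n)"
proof -
  have "finite {e. e \<subseteq> {0..<n} \<and> card e = 2}"
    by (rule finite_subset[of _ "Pow {0..<n}"]) auto
  then show ?thesis by (simp add: graphs_def Collect_subset)
qed

lemma k_clique_empty:
  assumes "2 \<le> t"
  shows "k_clique n {} t = 0"
proof -
  have "\<not> pairwise (\<lambda>x y. {x, y} \<in> {}) S" if "S \<subseteq> {0..<n}" "card S = t" for S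
  proof -
    have "\<not> card S \<le> Suc 0" using that assms by simp
    then show ?thesis
      using card_le_Suc0_iff_eq[OF finite_subset[OF that(1)]] by (auto simp: pairwise_def)
  qed
  then show ?thesis by (auto simp: k_clique_eq_0_iff cliques_def)
qed

lemma kprime_le:
  assumes "E \<in> graphs n" and "k_clique n E t = 0"
  shows "kprime s t n \<le> k_indep n E s"
  unfolding kprime_def using assms finite_graphs by (intro Min_le) auto

lemma kprime_attained:
  assumes "2 \<le> t"
  obtains E where "E \<in> graphs n" "k_clique n E t = 0" "kprime s t n = k_indep n E s"
proof -
  let ?K = "{k_indep n E s | E. E \<in> graphs n \<and> k_clique n E t = 0}"
  have "finite ?K" using finite_graphs by simp
  moreover have "k_indep n {} s \<in> ?K"
    using k_clique_empty[OF assms] by (auto simp: graphs_def)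
  ultimately have "Min ?K \<in> ?K" by (intro Min_in) auto
  then show ?thesis using that unfolding kprime_def by blast
qed

lemma kprime_le_binomial: "2 \<le> t \<Longrightarrow> kprime s t n \<le> n choose s"
  by (metis kprime_attained k_indep_le_binomial)

section \<open>Deleting a vertex: existence of the limit\<close>

definition pullback :: "(nat \<Rightarrow> nat) \<Rightarrow> nat \<Rightarrow> nat set set \<Rightarrow> nat set set" where
  "pullback f n E = {e. e \<subseteq> {0..<n} \<and> card e = 2 \<and> f ` e \<in> E}"

lemma pullback_in_graphs: "pullback f n E \<in> graphs n"
  by (auto simp: pullback_def graphs_def)

lemma pullback_pairwise_iff:
  assumes inj: "inj_on f {0..<n}" and S: "S \<subseteq> {0..<n}"
  shows "pairwise (\<lambda>x y. {x, y} \<in> pullback f n E) S \<longleftrightarrow> pairwise (\<lambda>x y. {x, y} \<in> E) (f ` S)"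
    and "pairwise (\<lambda>x y. {x, y} \<notin> pullback f n E) S \<longleftrightarrow> pairwise (\<lambda>x y. {x, y} \<notin> E) (f ` S)"
proof -
  have "{x, y} \<in> pullback f n E \<longleftrightarrow> {f x, f y} \<in> E" if "x \<in> S" "y \<in> S" "x \<noteq> y" for x y
    using that S by (auto simp: pullback_def)
  moreover have "f x \<noteq> f y" if "x \<in> S" "y \<in> S" "x \<noteq> y" for x y
    using that S inj by (auto dest: inj_onD)
  ultimately show "pairwise (\<lambda>x y. {x, y} \<in> pullback f n E) S \<longleftrightarrow> pairwise (\<lambda>x y. {x, y} \<in> E) (f ` S)"
    and "pairwise (\<lambda>x y. {x, y} \<notin> pullback f n E) S \<longleftrightarrow> pairwise (\<lambda>x y. {x, y} \<notin> E) (f ` S)"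
    by (auto simp: pairwise_image pairwise_def)
qed

lemma k_clique_pullback_le:
  assumes inj: "inj_on f {0..<n}" and img: "f ` {0..<n} \<subseteq> {0..<N}"
  shows "k_clique n (pullback f n E) t \<le> k_clique N E t"
proof -
  have "image f ` cliques n (pullback f n E) t \<subseteq> cliques N E t"
    using img card_image[OF inj_on_subset[OF inj]] pullback_pairwise_iff(1)[OF inj]
    by (fastforce simp: cliques_def)
  moreover have "inj_on (image f) (cliques n (pullback f n E) t)"
    by (rule inj_on_subset[OF inj_on_image_Pow[OF inj]]) (auto simp: cliques_def)
  ultimately have "card (cliques n (pullback f n E) t) \<le> card (cliques N E t)"
    by (intro card_inj_on_le finite_cliques)
  then show ?thesis by (simp add: k_clique_eq_card)
qed

lemma k_indep_pullback:
  assumes inj: "inj_on f {0..<n}" and img: "f ` {0..<n} \<subseteq> {0..<N}"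
  shows "k_indep n (pullback f n E) s = card {T \<in> indep_sets N E s. T \<subseteq> f ` {0..<n}}"
proof -
  have "image f ` indep_sets n (pullback f n E) s = {T \<in> indep_sets N E s. T \<subseteq> f ` {0..<n}}"
  proof (intro equalityI subsetI)
    fix T assume "T \<in> image f ` indep_sets n (pullback f n E) s"
    then show "T \<in> {T \<in> indep_sets N E s. T \<subseteq> f ` {0..<n}}"
      using img card_image[OF inj_on_subset[OF inj]] pullback_pairwise_iff(2)[OF inj]
      by (fastforce simp: indep_sets_def)
  next
    fix T assume T: "T \<in> {T \<in> indep_sets N E s. T \<subseteq> f ` {0..<n}}"
    define S where "S = {x \<in> {0..<n}. f x \<in> T}"
    have "S \<subseteq> {0..<n}" and "f ` S = T" using T by (auto simp: S_def)
    then have "S \<in> indep_sets n (pullback f n E) s"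
      using T card_image[OF inj_on_subset[OF inj]] pullback_pairwise_iff(2)[OF inj]
      by (auto simp: indep_sets_def)
    then show "T \<in> image f ` indep_sets n (pullback f n E) s" using \<open>f ` S = T\<close> by blast
  qed
  moreover have "inj_on (image f) (indep_sets n (pullback f n E) s)"
    by (rule inj_on_subset[OF inj_on_image_Pow[OF inj]]) (auto simp: indep_sets_def)
  ultimately show ?thesis by (metis card_image k_indep_eq_card)
qed

lemma kprime_le_card_indep_sets_avoiding:
  assumes E: "E \<in> graphs (Suc n)" "k_clique (Suc n) E t = 0" and v: "v \<le> n"
  shows "kprime s t n \<le> card {T \<in> indep_sets (Suc n) E s. v \<notin> T}"
proof -
  define f where "f i = (if i = v then n else i)" for i
  \<comment> \<open>pullback f n E is E minus v, with the vertex n renamed to v\<close>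
  have inj: "inj_on f {0..<n}" by (auto simp: f_def inj_on_def)
  have img: "f ` {0..<n} = {0..<Suc n} - {v}" using v by (auto simp: f_def image_iff)
  have "k_clique n (pullback f n E) t = 0"
    using k_clique_pullback_le[OF inj, of "Suc n" E t] img E(2) by auto
  then have "kprime s t n \<le> k_indep n (pullback f n E) s"
    by (intro kprime_le pullback_in_graphs)
  also have "\<dots> = card {T \<in> indep_sets (Suc n) E s. T \<subseteq> {0..<Suc n} - {v}}"
    using k_indep_pullback[OF inj, of "Suc n" E s] img by auto
  also have "{T \<in> indep_sets (Suc n) E s. T \<subseteq> {0..<Suc n} - {v}} = {T \<in> indep_sets (Suc n) E s. v \<notin> T}"
    by (auto simp: indep_sets_def)
  finally show ?thesis .
qed

lemma sum_card_avoiding: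
  assumes "finite V" and "finite I" and "\<And>T. T \<in> I \<Longrightarrow> T \<subseteq> V \<and> card T = s"
  shows "(\<Sum>v\<in>V. card {T \<in> I. v \<notin> T}) = card I * (card V - s)"
proof -
  have "(\<Sum>v\<in>V. card {T \<in> I. v \<notin> T}) = (\<Sum>v\<in>V. \<Sum>T\<in>I. if v \<notin> T then 1 else 0)"
    using assms(2) by (simp add: sum.If_cases Int_def)
  also have "\<dots> = (\<Sum>T\<in>I. \<Sum>v\<in>V. if v \<notin> T then 1 else 0)"
    by (rule sum.swap)
  also have "\<dots> = (\<Sum>T\<in>I. card (V - T))"
    using assms(1) by (simp add: sum.If_cases Diff_eq Compl_eq)
  also have "\<dots> = (\<Sum>T\<in>I. card V - s)"
    using assms by (intro sum.cong refl) (metis card_Diff_subset finite_subset)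
  finally show ?thesis by simp
qed

lemma kprime_vertex_deletion:
  assumes "2 \<le> t"
  shows "Suc n * kprime s t n \<le> (Suc n - s) * kprime s t (Suc n)"
proof -
  obtain E where E: "E \<in> graphs (Suc n)" "k_clique (Suc n) E t = 0"
    and opt: "kprime s t (Suc n) = k_indep (Suc n) E s"
    using kprime_attained[OF assms] .
  have "Suc n * kprime s t n = (\<Sum>v\<in>{0..<Suc n}. kprime s t n)" by simp
  also have "\<dots> \<le> (\<Sum>v\<in>{0..<Suc n}. card {T \<in> indep_sets (Suc n) E s. v \<notin> T})"
    using kprime_le_card_indep_sets_avoiding[OF E] by (intro sum_mono) auto
  also have "\<dots> = card (indep_sets (Suc n) E s) * (Suc n - s)"
    by (subst sum_card_avoiding) (auto simp: finite_indep_sets indep_sets_def)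
  finally show ?thesis by (simp add: opt k_indep_eq_card mult.commute)
qed

definition kprime_ratio :: "nat \<Rightarrow> nat \<Rightarrow> nat \<Rightarrow> real" where
  "kprime_ratio s t n = real (kprime s t n) / real (n choose s)"

lemma kprime_ratio_le_1: "2 \<le> t \<Longrightarrow> kprime_ratio s t n \<le> 1"
  using kprime_le_binomial[of t s n]
  by (cases "n choose s = 0") (auto simp: kprime_ratio_def divide_le_eq_1)

lemma kprime_ratio_mono:
  assumes "2 \<le> t" and "s \<le> n"
  shows "kprime_ratio s t n \<le> kprime_ratio s t (Suc n)"
proof -
  have pos: "0 < real (Suc n - s)" "0 < real (n choose s)" using assms(2) by simp_all
  have "Suc n * (n choose s) = (Suc n - s) * (Suc n choose s)"
    using binomial_absorb_comp[of "Suc n" s] by simp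
  then have binom: "real (Suc n) * real (n choose s) = real (Suc n - s) * real (Suc n choose s)"
    by (metis of_nat_mult)
  have "kprime_ratio s t n = real (Suc n) * real (kprime s t n) / (real (Suc n) * real (n choose s))"
    by (simp add: kprime_ratio_def)
  also have "\<dots> \<le> real (Suc n - s) * real (kprime s t (Suc n)) / (real (Suc n) * real (n choose s))"
    using kprime_vertex_deletion[OF assms(1), of n s] pos
    by (intro divide_right_mono) (simp_all only: of_nat_mult [symmetric] of_nat_le_iff of_nat_0_le_iff)
  also have "\<dots> = kprime_ratio s t (Suc n)"
    unfolding binom kprime_ratio_def using pos(1) by simp
  finally show ?thesis .
qed

lemma kprime_ratio_tendsto_g:
  assumes "2 \<le> t"
  shows "kprime_ratio s t \<longlonglongrightarrow> g s t"
    and "s \<le> n \<Longrightarrow> kprime_ratio s t n \<le> g s t"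
proof -
  let ?r = "\<lambda>i. kprime_ratio s t (i + s)"
  have "incseq ?r" by (rule incseq_SucI) (simp add: kprime_ratio_mono[OF assms])
  moreover have "bdd_above (range ?r)"
    by (rule bdd_aboveI[of _ 1]) (use kprime_ratio_le_1[OF assms] in auto)
  ultimately have r: "?r \<longlonglongrightarrow> (SUP i. ?r i)" by (rule LIMSEQ_incseq_SUP[rotated])
  then have lim: "kprime_ratio s t \<longlonglongrightarrow> (SUP i. ?r i)" by (rule LIMSEQ_offset)
  moreover from lim have "g s t = (SUP i. ?r i)"
    unfolding g_def kprime_ratio_def[abs_def] by (rule limI)
  ultimately show "kprime_ratio s t \<longlonglongrightarrow> g s t" by simp
  show "kprime_ratio s t n \<le> g s t" if "s \<le> n"
    using incseq_le[OF \<open>incseq ?r\<close> r, of "n - s"] that \<open>g s t = _\<close> by simp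
qed

lemma g_nonneg: "2 \<le> t \<Longrightarrow> 0 \<le> g s t"
  using kprime_ratio_tendsto_g(2)[of t s s] by (simp add: kprime_ratio_def order_trans[rotated])

lemma kprime_le_g:
  assumes "2 \<le> t"
  shows "real (kprime s t n) \<le> g s t * real (n choose s)"
proof (cases "s \<le> n")
  case True
  then show ?thesis
    using kprime_ratio_tendsto_g(2)[OF assms True] by (simp add: kprime_ratio_def divide_le_eq)
next
  case False
  then have "n choose s = 0" by simp
  then show ?thesis using kprime_le_binomial[OF assms, of s n] by (simp del: binomial_eq_0_iff)
qed

section \<open>Joining an independent set\<close>

definition join :: "nat \<Rightarrow> nat \<Rightarrow> nat set set \<Rightarrow> nat set set" where
  "join n m E = E \<union> {{x, y} | x y. x < n \<and> n \<le> y \<and> y < n + m}"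

lemma join_in_graphs:
  assumes "E \<in> graphs n"
  shows "join n m E \<in> graphs (n + m)"
  using assms by (fastforce simp: join_def graphs_def card_insert_if)

lemma join_edge_iff:
  assumes "E \<in> graphs n"
  shows "{x, y} \<in> join n m E \<longleftrightarrow>
    (x < n \<and> y < n \<and> {x, y} \<in> E) \<or> (x < n \<and> n \<le> y \<and> y < n + m) \<or> (y < n \<and> n \<le> x \<and> x < n + m)"
  using assms by (auto simp: join_def doubleton_eq_iff graphs_def)

lemma k_clique_join:
  assumes E: "E \<in> graphs n" and free: "k_clique n E t = 0"
  shows "k_clique (n + m) (join n m E) (Suc t) = 0"
proof -
  have False if S: "S \<in> cliques (n + m) (join n m E) (Suc t)" for S
  proof -
    have fin: "finite S" using S finite_subset by (auto simp: cliques_def)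
    have "card (S - {0..<n}) \<le> Suc 0"
      using S E by (force simp: card_le_Suc0_iff_eq fin cliques_def pairwise_def join_edge_iff)
    moreover have "card S = card (S \<inter> {0..<n}) + card (S - {0..<n})"
      using card_Int_Diff[OF fin] by blast
    ultimately have "t \<le> card (S \<inter> {0..<n})" using S by (simp add: cliques_def)
    then obtain A where A: "A \<subseteq> S \<inter> {0..<n}" "card A = t"
      by (meson obtain_subset_with_card_n)
    have "{x, y} \<in> E" if "x \<in> A" "y \<in> A" "x \<noteq> y" for x y
    proof -
      have "{x, y} \<in> join n m E" using that A S unfolding cliques_def pairwise_def by blast
      moreover have "x < n" "y < n" using that A by auto
      ultimately show ?thesis using join_edge_iff[OF E] by auto
    qed
    then have "A \<in> cliques n E t" using A by (auto simp: cliques_def pairwise_def)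
    then show False using free by (simp add: k_clique_eq_0_iff)
  qed
  then show ?thesis by (auto simp: k_clique_eq_0_iff)
qed

lemma k_indep_join:
  assumes E: "E \<in> graphs n"
  shows "k_indep (n + m) (join n m E) s \<le> k_indep n E s + (m choose s)"
proof -
  let ?H = "{T. T \<subseteq> {n..<n + m} \<and> card T = s}"
  have "indep_sets (n + m) (join n m E) s \<subseteq> indep_sets n E s \<union> ?H"
  proof
    fix T assume T: "T \<in> indep_sets (n + m) (join n m E) s"
    show "T \<in> indep_sets n E s \<union> ?H"
    proof (cases "T \<subseteq> {n..<n + m}")
      case False
      then obtain x where "x \<in> T" "x < n" using T by (fastforce simp: indep_sets_def subset_iff)
      then have "T \<subseteq> {0..<n}"
        using T E by (fastforce simp: indep_sets_def pairwise_def join_edge_iff)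
      then show ?thesis
        using T E by (intro UnI1) (force simp: indep_sets_def pairwise_def join_edge_iff)
    qed (use T in \<open>auto simp: indep_sets_def\<close>)
  qed
  then have "k_indep (n + m) (join n m E) s \<le> card (indep_sets n E s \<union> ?H)"
    unfolding k_indep_eq_card by (intro card_mono) (auto simp: finite_indep_sets)
  also have "\<dots> \<le> card (indep_sets n E s) + card ?H" by (rule card_Un_le)
  also have "card ?H = m choose s" using n_subsets[of "{n..<n + m}" s] by simp
  finally show ?thesis by (simp add: k_indep_eq_card)
qed

lemma kprime_Suc_add_le:
  assumes "2 \<le> t"
  shows "kprime s (Suc t) (n + m) \<le> kprime s t n + (m choose s)"
proof -
  obtain E where E: "E \<in> graphs n" "k_clique n E t = 0" and opt: "kprime s t n = k_indep n E s"
    using kprime_attained[OF assms] .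
  have "kprime s (Suc t) (n + m) \<le> k_indep (n + m) (join n m E) s"
    by (intro kprime_le join_in_graphs k_clique_join E)
  also have "\<dots> \<le> kprime s t n + (m choose s)" using k_indep_join[OF E(1)] opt by simp
  finally show ?thesis .
qed

section \<open>The recursion for g\<close>

lemma binomial_le_binomial_mult_power:
  assumes "n \<le> k"
  shows "real (n choose s) \<le> real (k choose s) * (real n / real k) ^ s"
proof (cases "s \<le> n")
  case False
  then show ?thesis by (simp add: binomial_eq_0)
next
  case True
  have factor: "real (n - i) / real (s - i) \<le> real (k - i) / real (s - i) * (real n / real k)"
    if "i < s" for i
  proof -
    have "real i * real n \<le> real i * real k" using assms by (simp add: mult_left_mono)
    then have "real (n - i) * real k \<le> real (k - i) * real n"
      using that True assms by (simp add: of_nat_diff algebra_simps)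
    then have "real (n - i) \<le> real (k - i) * real n / real k"
      using that True assms by (simp add: pos_le_divide_eq)
    then have "real (n - i) / real (s - i) \<le> real (k - i) * real n / real k / real (s - i)"
      by (rule divide_right_mono) simp
    then show ?thesis by (simp add: ac_simps)
  qed
  have "real (n choose s) = (\<Prod>i = 0..<s. real (n - i) / real (s - i))"
    by (rule binomial_altdef_of_nat[OF True])
  also have "\<dots> \<le> (\<Prod>i = 0..<s. real (k - i) / real (s - i) * (real n / real k))"
    using factor by (intro prod_mono) auto
  also have "\<dots> = real (k choose s) * (real n / real k) ^ s"
    by (simp only: prod.distrib prod_constant card_atLeastLessThan diff_zero
        binomial_altdef_of_nat[OF order.trans[OF True assms]])
  finally show ?thesis .
qed

lemma kprime_ratio_Suc_le:
  assumes t: "2 \<le> t" and \<alpha>: "0 \<le> \<alpha>" "\<alpha> \<le> 1" and k: "0 < k"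
  shows "kprime_ratio s (Suc t) k \<le> g s t * \<alpha> ^ s + (1 - \<alpha> + 1 / real k) ^ s"
proof -
  define n where "n = nat \<lfloor>\<alpha> * real k\<rfloor>"
  define m where "m = k - n"
  have n: "real n \<le> \<alpha> * real k" "\<alpha> * real k < real n + 1"
    using \<alpha> by (simp_all add: n_def)
  moreover have "\<alpha> * real k \<le> real k" using \<alpha> by (simp add: mult_left_le_one_le)
  ultimately have "n \<le> k" by linarith
  then have m: "real m = real k - real n" by (simp add: m_def)
  have ratio_n: "real n / real k \<le> \<alpha>" using n k by (simp add: divide_le_eq)
  have "real m \<le> (1 - \<alpha> + 1 / real k) * real k"
    using n k m by (simp add: algebra_simps)
  then have ratio_m: "real m / real k \<le> 1 - \<alpha> + 1 / real k"
    using k by (simp add: pos_divide_le_eq)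
  have g: "0 \<le> g s t" by (rule g_nonneg[OF t])
  have "real (kprime s (Suc t) k) \<le> real (kprime s t n) + real (m choose s)"
    using kprime_Suc_add_le[OF t, of s n m] \<open>n \<le> k\<close> by (simp add: m_def flip: of_nat_add)
  also have "\<dots> \<le> g s t * real (n choose s) + real (m choose s)"
    using kprime_le_g[OF t] by simp
  also have "\<dots> \<le> g s t * (real (k choose s) * (real n / real k) ^ s)
      + real (k choose s) * (real m / real k) ^ s"
    using binomial_le_binomial_mult_power[of n k] binomial_le_binomial_mult_power[of m k] \<open>n \<le> k\<close> g
    by (intro add_mono mult_left_mono) (auto simp: m_def)
  also have "\<dots> = real (k choose s) * (g s t * (real n / real k) ^ s + (real m / real k) ^ s)"
    by (simp add: algebra_simps)
  also have "\<dots> \<le> real (k choose s) * (g s t * \<alpha> ^ s + (1 - \<alpha> + 1 / real k) ^ s)"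
    using ratio_n ratio_m g by (intro mult_left_mono add_mono power_mono) auto
  finally have "real (kprime s (Suc t) k) \<le> real (k choose s) * (g s t * \<alpha> ^ s + (1 - \<alpha> + 1 / real k) ^ s)" .
  moreover have "0 \<le> g s t * \<alpha> ^ s + (1 - \<alpha> + 1 / real k) ^ s" using g \<alpha> by simp
  ultimately show ?thesis
    by (cases "k choose s = 0") (simp_all add: kprime_ratio_def divide_le_eq mult.commute)
qed

lemma g_Suc_le:
  assumes t: "2 \<le> t" and \<alpha>: "0 \<le> \<alpha>" "\<alpha> \<le> 1"
  shows "g s (Suc t) \<le> g s t * \<alpha> ^ s + (1 - \<alpha>) ^ s"
proof -
  have "(\<lambda>k. g s t * \<alpha> ^ s + (1 - \<alpha> + 1 / real k) ^ s) \<longlonglongrightarrow> g s t * \<alpha> ^ s + (1 - \<alpha> + 0) ^ s"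
    by (intro tendsto_intros)
  then have bound: "(\<lambda>k. g s t * \<alpha> ^ s + (1 - \<alpha> + 1 / real k) ^ s) \<longlonglongrightarrow> g s t * \<alpha> ^ s + (1 - \<alpha>) ^ s"
    by simp
  have "kprime_ratio s (Suc t) \<longlonglongrightarrow> g s (Suc t)"
    using t by (intro kprime_ratio_tendsto_g) simp
  then show ?thesis
    by (rule LIMSEQ_le[OF _ bound]) (use kprime_ratio_Suc_le[OF t \<alpha>] in \<open>auto intro!: exI[of _ 1]\<close>)
qed

lemma g_antimono:
  assumes "2 \<le> t" and "1 \<le> s" and "t \<le> t'"
  shows "g s t' \<le> g s t"
  using \<open>t \<le> t'\<close>
proof (induction rule: dec_induct)
  case (step i)
  have "g s (Suc i) \<le> g s i * 1 ^ s + (1 - 1) ^ s"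
    using assms(1) step.hyps(1) by (intro g_Suc_le) auto
  then show ?case using step.IH assms(2) by (simp add: power_0_left)
qed simp

lemma g_Suc_le_powr:
  assumes t: "2 \<le> t" and s: "1 \<le> s" and u: "0 \<le> u" and bound: "g s t \<le> u powr (1 - real s)"
  shows "g s (Suc t) \<le> (u + 1) powr (1 - real s)"
proof (cases "u = 0")
  case True
  have "g s (Suc t) \<le> g s t * 0 ^ s + (1 - 0) ^ s" by (rule g_Suc_le[OF t]) simp_all
  then show ?thesis using True s by (simp add: power_0_left)
next
  case False
  with u have u: "0 < u" by simp
  \<comment> \<open>the minimiser of u^{1-s} \<alpha>^s + (1 - \<alpha>)^s\<close>
  define \<alpha> where "\<alpha> = u / (u + 1)"
  have \<alpha>: "0 \<le> \<alpha>" "\<alpha> \<le> 1" "1 - \<alpha> = 1 / (u + 1)" using u by (simp_all add: \<alpha>_def field_simps)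
  have "g s (Suc t) \<le> g s t * \<alpha> ^ s + (1 - \<alpha>) ^ s"
    by (rule g_Suc_le[OF t \<alpha>(1,2)])
  also have "\<dots> \<le> u powr (1 - real s) * \<alpha> ^ s + (1 - \<alpha>) ^ s"
    using bound \<alpha> by (intro add_right_mono mult_right_mono) simp_all
  also have "\<dots> = u / (u + 1) ^ s + 1 / (u + 1) ^ s"
    using u unfolding \<alpha>(3) by (simp add: \<alpha>_def power_divide powr_diff powr_realpow)
  also have "\<dots> = (u + 1) powr (1 - real s)"
    using u by (simp add: powr_diff powr_realpow add_divide_distrib)
  finally show ?thesis .
qed

lemma g_add_le_powr:
  assumes s: "2 \<le> s" and t: "2 \<le> t"
  shows "g s (t + d) \<le> (real d + g s t powr (1 / (1 - real s))) powr (1 - real s)"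
proof (induction d)
  case 0
  have "(g s t powr (1 / (1 - real s))) powr (1 - real s) = g s t"
    using s g_nonneg[OF t, of s] by (cases "g s t = 0") (simp_all add: powr_powr)
  then show ?case by simp
next
  case (Suc d)
  have "g s (Suc (t + d)) \<le> (real d + g s t powr (1 / (1 - real s)) + 1) powr (1 - real s)"
    using t s Suc.IH by (intro g_Suc_le_powr) auto
  then show ?case by (simp add: add_ac)
qed

text \<open>(t - 1)^{1-s} is the limiting density of s-independent sets in the Turan graph T_{t-1}(n).\<close>

lemma g_below_turan_propagates:
  assumes s: "2 \<le> s" and t0: "2 \<le> t0" and "t0 \<le> t"
    and less: "g s t0 < (real t0 - 1) powr (1 - real s)"
  shows "g s t < (real t - 1) powr (1 - real s)"
proof (cases "g s t0 = 0")
  case True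
  \<comment> \<open>then g s t0 powr (1 / (1 - s)) is 0 rather than infinite, and g_add_le_powr is useless\<close>
  moreover have "g s t \<le> g s t0" using assms by (intro g_antimono) simp_all
  moreover have "0 < (real t - 1) powr (1 - real s)" using assms by simp
  ultimately show ?thesis by linarith
next
  case False
  let ?p = "1 - real s"
  have p: "?p < 0" using s by simp
  have "0 < g s t0" using False g_nonneg[OF t0] by (simp add: order_less_le)
  then have "((real t0 - 1) powr ?p) powr (1 / ?p) < g s t0 powr (1 / ?p)"
    using less p by (intro powr_less_mono2_neg) simp_all
  then have "real t - 1 < real (t - t0) + g s t0 powr (1 / ?p)"
    using p assms by (simp add: powr_powr of_nat_diff)
  then have "(real (t - t0) + g s t0 powr (1 / ?p)) powr ?p < (real t - 1) powr ?p"
    using p assms by (intro powr_less_mono2_neg) simp_all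
  then show ?thesis using g_add_le_powr[OF s t0, of "t - t0"] assms by simp
qed

theorem proposition5p1:
  fixes s t0 t :: nat
  assumes "s \<ge> 2" and "t0 \<ge> 2" and "t \<ge> t0"
  shows "g s t \<le> (real t - real t0 + g s t0 powr (1 / (1 - real s))) powr (1 - real s)
       \<and> (g s t0 < (real t0 - 1) powr (1 - real s) \<longrightarrow> g s t < (real t - 1) powr (1 - real s))"
  using g_add_le_powr[OF assms(1,2), of "t - t0"] g_below_turan_propagates[OF assms] assms(3)
  by (simp add: of_nat_diff)

end
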